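(* Let $k\ge1$, $-\frac{\pi}{2}\le\theta_1<\theta_2<\dots<\theta_{k+1}\le\frac{\pi}{2}$ and $\theta_{\min}=\min_{p\ne j}|\theta_p-\theta_j|$. Then for any $\hat\theta_1,\dots,\hat\theta_k\in\mathbb R$, $$\|\eta_{k+1,k}(e^{i\theta_1},\dots,e^{i\theta_{k+1}},e^{i\hat\theta_1},\dots,e^{i\hat\theta_k})\|_\infty\ge\xi(k)\Big(\frac{2\theta_{\min}}{\pi}\Big)^k.$$
   Context: For $z_1,\dots,z_p,\hat z_1,\dots,\hat z_q\in\mathbb C$, $\eta_{p,q}(z_1,\dots,z_p,\hat z_1,\dots,\hat z_q)\in\mathbb R^p$ is the vector whose $j$-th entry is $\prod_{l=1}^q|z_j-\hat z_l|$. For an integer $k\ge1$: $\xi(1)=\frac12$; $\xi(k)=\frac{(\frac{k-1}{2})!(\frac{k-3}{2})!}{4}$ if $k\ge3$ is odd; $\xi(k)=\frac{((\frac{k-2}{2})!)^2}{4}$ if $k$ is even. *)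

theory Defs
  imports "HOL-Analysis.Analysis"
begin

text \<open>Vectors are represented as functions on 1-based indices. eta p q z zh j is the
  j-th entry (1 \<le> j \<le> p) of eta_{p,q}(z_1..z_p, zh_1..zh_q).\<close>
definition eta :: "nat \<Rightarrow> nat \<Rightarrow> (nat \<Rightarrow> complex) \<Rightarrow> (nat \<Rightarrow> complex) \<Rightarrow> nat \<Rightarrow> real" where
  "eta p q z zh j = (\<Prod>l\<in>{1..q}. cmod (z j - zh l))"

definition inf_norm :: "nat \<Rightarrow> (nat \<Rightarrow> real) \<Rightarrow> real" where
  "inf_norm p v = Max ((\<lambda>j. \<bar>v j\<bar>) ` {1..p})"

definition xi :: "nat \<Rightarrow> real" where
  "xi k = (if k = 1 then 1/2
           else if odd k then fact ((k - 1) div 2) * fact ((k - 3) div 2) / 4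
           else (fact ((k - 2) div 2))^2 / 4)"

definition theta_min :: "nat \<Rightarrow> (nat \<Rightarrow> real) \<Rightarrow> real" where
  "theta_min n \<theta> = Min {\<bar>\<theta> p - \<theta> j\<bar> | p j. p \<in> {1..n} \<and> j \<in> {1..n} \<and> p \<noteq> j}"

end

theory Submission
  imports Defs "HOL-Computational_Algebra.Polynomial"
begin

text \<open>The polynomial p(z) = \<Prod>l. (z - cis (\<theta>h l)) is monic of degree k, so Lagrange interpolation
  at the k + 1 nodes z j = cis (\<theta> j) gives 1 = \<Sum>j. p(z j) / \<Prod>m\<noteq>j. (z j - z m). By Jordan's
  inequality every chord satisfies |z i - z j| \<ge> (2/\<pi>) |\<theta> i - \<theta> j| \<ge> c |i - j| with
  c = 2 \<theta>_min / \<pi>, so the j-th denominator has modulus at least c^k (j-1)! (k+1-j)!. As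
  \<Sum>j. 1/((j-1)! (k+1-j)!) = 2^k/k!, some |p(z j)| is at least k! c^k / 2^k, which dominates \<xi>(k) c^k.\<close>

lemma degree_prod_linear:
  fixes a :: "'b \<Rightarrow> 'a::idom"
  shows "degree (\<Prod>x\<in>A. [:- a x, 1:]) = card A"
  by (cases "finite A") (simp_all add: degree_prod_eq_sum_degree)

lemma lead_coeff_prod_linear:
  fixes a :: "'b \<Rightarrow> 'a::idom"
  shows "lead_coeff (\<Prod>x\<in>A. [:- a x, 1:]) = 1"
  by (simp add: lead_coeff_prod)

lemma coeff_eq_sum_lagrange:
  fixes x :: "'b \<Rightarrow> 'a::field" and p :: "'a poly"
  assumes "finite A" "card A = Suc n" "inj_on x A" "degree p \<le> n"
  shows "coeff p n = (\<Sum>j\<in>A. poly p (x j) / (\<Prod>m\<in>A-{j}. x j - x m))"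
proof -
  define L where "L j = (\<Prod>m\<in>A-{j}. [:- x m, 1:])" for j
  define c where "c j = poly p (x j) / (\<Prod>m\<in>A-{j}. x j - x m)" for j
  define q where "q = (\<Sum>j\<in>A. smult (c j) (L j))"
  have degree_L: "degree (L j) = n" if "j \<in> A" for j
    using assms(1,2) that by (simp add: L_def degree_prod_linear)
  have poly_L: "poly (L j) y = (\<Prod>m\<in>A-{j}. y - x m)" for j y
    by (simp add: L_def poly_prod)
  have "poly q (x i) = poly p (x i)" if i: "i \<in> A" for i
  proof -
    have "poly q (x i) = c i * poly (L i) (x i) + (\<Sum>j\<in>A-{i}. c j * poly (L j) (x i))"
      using assms(1) i by (simp add: q_def poly_sum sum.remove)
    also have "(\<Sum>j\<in>A-{i}. c j * poly (L j) (x i)) = 0"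
      using assms(1) i by (intro sum.neutral) (auto simp: poly_L)
    also have "(\<Prod>m\<in>A-{i}. x i - x m) \<noteq> 0"
      using assms(1,3) i by (auto simp: inj_on_def)
    then have "c i * poly (L i) (x i) = poly p (x i)"
      by (simp add: c_def poly_L)
    finally show ?thesis by simp
  qed
  moreover have "degree q \<le> n"
    unfolding q_def using degree_L
    by (intro degree_sum_le[OF assms(1)]) (metis degree_smult_le)
  moreover have "card (x ` A) = Suc n"
    using assms(2,3) by (simp add: card_image)
  ultimately have "p = q"
    using assms(4) by (intro poly_eqI_degree[of "x ` A"]) auto
  moreover have "coeff (L j) n = 1" if "j \<in> A" for j
    using degree_L[OF that] lead_coeff_prod_linear[of x "A - {j}"] by (simp add: L_def)
  then have "coeff q n = (\<Sum>j\<in>A. c j)"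
    by (simp add: q_def coeff_sum)
  ultimately show ?thesis
    by (simp add: c_def)
qed

lemma jordan_inequality:
  fixes x :: real
  assumes "0 \<le> x" "x \<le> pi/2"
  shows "2/pi * x \<le> sin x"
proof -
  have "convex_on {0..pi/2} (\<lambda>x. - sin x)"
  proof (rule convex_on_realI[where f'="\<lambda>x. - cos x"])
    show "((\<lambda>x. - sin x) has_real_derivative - cos x) (at x)" for x :: real
      by (auto intro!: derivative_eq_intros)
    show "- cos x \<le> - cos y" if "x \<in> {0..pi/2}" "y \<in> {0..pi/2}" "x \<le> y" for x y :: real
      using that by (simp add: cos_monotone_0_pi_le)
  qed simp
  then have "concave_on {0..pi/2} sin"
    by (simp add: convex_on_iff_concave)
  from concave_onD_Icc'[OF this, of x] assms show ?thesis
    by simp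
qed

lemma norm_cis_diff: "cmod (cis a - cis b) = 2 * \<bar>sin ((a - b)/2)\<bar>"
proof -
  have "(cmod (cis a - cis b))\<^sup>2 = 2 - 2 * cos (a - b)"
    by (simp add: cmod_power2 cos_diff power2_diff algebra_simps)
  also have "cos (a - b) = 1 - 2 * (sin ((a - b)/2))\<^sup>2"
    using cos_double_sin[of "(a - b)/2"] by (simp only: mult_2 field_sum_of_halves)
  finally have "(cmod (cis a - cis b))\<^sup>2 = (2 * \<bar>sin ((a - b)/2)\<bar>)\<^sup>2"
    by (simp add: power_mult_distrib)
  then show ?thesis
    by (rule power2_eq_imp_eq) auto
qed

lemma norm_cis_diff_ge:
  assumes "\<bar>a - b\<bar> \<le> pi"
  shows "2/pi * \<bar>a - b\<bar> \<le> cmod (cis a - cis b)"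
proof -
  have "sin (\<bar>a - b\<bar>/2) \<ge> 0"
    using assms by (intro sin_ge_zero) auto
  moreover have "\<bar>sin ((a - b)/2)\<bar> = \<bar>sin (\<bar>a - b\<bar>/2)\<bar>"
  proof (cases "a \<le> b")
    case True
    then have "(a - b)/2 = - (\<bar>a - b\<bar>/2)"
      by (simp add: abs_if)
    then show ?thesis
      by (simp only: sin_minus abs_minus_cancel)
  qed simp
  ultimately have "\<bar>sin ((a - b)/2)\<bar> = sin (\<bar>a - b\<bar>/2)"
    by simp
  moreover have "2/pi * (\<bar>a - b\<bar>/2) \<le> sin (\<bar>a - b\<bar>/2)"
    using assms by (intro jordan_inequality) auto
  ultimately show ?thesis
    by (simp add: norm_cis_diff)
qed

lemma prod_abs_diff_of_nat:
  assumes "j \<in> {1..n}"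
  shows "(\<Prod>m\<in>{1..n}-{j}. \<bar>real j - real m\<bar>) = fact (j - 1) * fact (n - j)"
proof -
  have split: "{1..n}-{j} = {1..<j} \<union> {j<..n}"
    using assms by auto
  have "(\<Prod>m\<in>{1..n}-{j}. \<bar>real j - real m\<bar>)
      = (\<Prod>m\<in>{1..<j}. \<bar>real j - real m\<bar>) * (\<Prod>m\<in>{j<..n}. \<bar>real j - real m\<bar>)"
    unfolding split by (rule prod.union_disjoint) auto
  also have "(\<Prod>m\<in>{1..<j}. \<bar>real j - real m\<bar>) = (\<Prod>i=1..j-1. real i)"
    by (rule prod.reindex_bij_witness[where i="\<lambda>i. j - i" and j="\<lambda>m. j - m"])
      (auto simp: of_nat_diff)
  also have "(\<Prod>m\<in>{j<..n}. \<bar>real j - real m\<bar>) = (\<Prod>i=1..n-j. real i)"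
    by (rule prod.reindex_bij_witness[where i="\<lambda>i. i + j" and j="\<lambda>m. m - j"])
      (auto simp: of_nat_diff)
  finally show ?thesis
    by (simp add: fact_prod)
qed

lemma sum_inverse_fact_mult_fact:
  "(\<Sum>j=1..k+1. 1 / (fact (j - 1) * fact (k + 1 - j)) :: real) = 2^k / fact k"
proof -
  have "(\<Sum>j=1..k+1. 1 / (fact (j - 1) * fact (k + 1 - j)) :: real)
      = (\<Sum>i\<le>k. real (k choose i) / fact k)"
    by (rule sum.reindex_bij_witness[where i="\<lambda>i. i + 1" and j="\<lambda>j. j - 1"])
      (auto simp: binomial_fact)
  also have "\<dots> = 2^k / fact k"
    by (simp add: choose_row_sum flip: sum_divide_distrib of_nat_sum)
  finally show ?thesis .
qed

lemma fact_mult_fact_mult_power_two_le_fact: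
  assumes "d \<le> 1"
  shows "fact (m + d) * fact m * 2 ^ (2*m + d) \<le> (fact (2*m + d + 2) :: nat)"
proof (induction m)
  case 0
  then show ?case
    using assms by (cases d) (auto simp: fact_numeral)
next
  case (Suc m)
  have amgm: "4 * (m + d + 1) * (m + 1) \<le> (2*m + d + 3) * (2*m + d + 4)"
    by (simp add: algebra_simps)
  have "fact (Suc m + d) * fact (Suc m) * 2 ^ (2 * Suc m + d)
      = (4 * (m + d + 1) * (m + 1)) * (fact (m + d) * fact m * 2 ^ (2*m + d))"
    by (simp add: algebra_simps)
  also have "\<dots> \<le> ((2*m + d + 3) * (2*m + d + 4)) * fact (2*m + d + 2)"
    by (intro mult_mono amgm Suc.IH) simp_all
  also have "\<dots> = fact (2 * Suc m + d + 2)"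
    by (simp add: algebra_simps)
  finally show ?case .
qed

lemma xi_le_fact_div_power:
  assumes "k \<ge> 1"
  shows "xi k \<le> fact k / 2^k"
proof (cases "k = 1")
  case False
  define m where "m = (k - 2) div 2"
  define d where "d = (k - 2) mod 2"
  have k: "k = 2*m + d + 2" and d: "d \<le> 1"
    using assms False by (simp_all add: m_def d_def)
  have "k \<noteq> 1"
    using k by simp
  have "xi k = fact (m + d) * fact m / 4"
  proof (cases "d = 0")
    case True
    then have "even k" "(k - 2) div 2 = m" using k by simp_all
    then show ?thesis using \<open>k \<noteq> 1\<close> True by (simp add: xi_def power2_eq_square)
  next
    case False
    with d have "d = 1" by simp
    then have "odd k" "(k - 1) div 2 = m + d" "(k - 3) div 2 = m" using k by simp_all
    then show ?thesis using \<open>k \<noteq> 1\<close> by (simp add: xi_def)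
  qed
  also have "\<dots> = real (fact (m + d) * fact m * 2 ^ (2*m + d)) / 2^k"
    by (simp add: k power_add)
  also have "\<dots> \<le> real (fact k) / 2^k"
  proof (rule divide_right_mono)
    show "real (fact (m + d) * fact m * 2 ^ (2*m + d)) \<le> real (fact k)"
      using fact_mult_fact_mult_power_two_le_fact[OF d, of m] by (simp only: k of_nat_le_iff)
  qed simp
  finally show ?thesis
    by simp
qed (simp add: xi_def)

lemma max_norm_monic_poly_ge:
  fixes p :: "'a::real_normed_field poly" and z :: "nat \<Rightarrow> 'a"
  assumes deg: "degree p = n" and monic: "lead_coeff p = 1" and "c > 0"
    and spread: "\<And>i j. i \<in> {1..n+1} \<Longrightarrow> j \<in> {1..n+1} \<Longrightarrow> c * \<bar>real i - real j\<bar> \<le> norm (z i - z j)"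
  shows "fact n / 2^n * c^n \<le> Max ((\<lambda>j. norm (poly p (z j))) ` {1..n+1})"
proof -
  define A where "A = {1..n+1}"
  define M where "M = Max ((\<lambda>j. norm (poly p (z j))) ` A)"
  define w where "w j = c^n * (fact (j - 1) * fact (n + 1 - j))" for j
  have w_pos: "w j > 0" for j
    using \<open>c > 0\<close> by (simp add: w_def)
  have "inj_on z A"
  proof (rule inj_onI)
    fix i j assume "i \<in> A" "j \<in> A" "z i = z j"
    have "c * \<bar>real i - real j\<bar> \<le> norm (z i - z j)"
      using \<open>i \<in> A\<close> \<open>j \<in> A\<close> spread by (simp add: A_def)
    with \<open>z i = z j\<close> have "c * \<bar>real i - real j\<bar> \<le> 0"
      by simp
    then show "i = j"
      using \<open>c > 0\<close> by (simp add: mult_le_0_iff)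
  qed
  then have "coeff p n = (\<Sum>j\<in>A. poly p (z j) / (\<Prod>m\<in>A-{j}. z j - z m))"
    by (intro coeff_eq_sum_lagrange) (simp_all add: A_def deg)
  with deg monic have lagrange: "1 = norm (\<Sum>j\<in>A. poly p (z j) / (\<Prod>m\<in>A-{j}. z j - z m))"
    by simp
  have w_le: "w j \<le> norm (\<Prod>m\<in>A-{j}. z j - z m)" if "j \<in> A" for j
  proof -
    have "w j = (\<Prod>m\<in>A-{j}. c * \<bar>real j - real m\<bar>)"
      using that prod_abs_diff_of_nat[of j "n+1"] by (simp add: w_def A_def prod.distrib)
    also have "\<dots> \<le> (\<Prod>m\<in>A-{j}. norm (z j - z m))"
      using that spread \<open>c > 0\<close> by (intro prod_mono) (auto simp: A_def)
    finally show ?thesis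
      by (simp add: prod_norm)
  qed
  have M_ge: "norm (poly p (z j)) \<le> M" if "j \<in> A" for j
    using that by (auto simp: M_def A_def)
  have "0 \<le> M"
    using order_trans[OF norm_ge_zero M_ge[of 1]] by (simp add: A_def)
  have "1 \<le> (\<Sum>j\<in>A. norm (poly p (z j)) / norm (\<Prod>m\<in>A-{j}. z j - z m))"
    unfolding lagrange by (rule order_trans[OF norm_sum]) (simp add: norm_divide)
  also have "\<dots> \<le> (\<Sum>j\<in>A. M / w j)"
    using M_ge w_le w_pos \<open>0 \<le> M\<close> by (intro sum_mono frac_le) auto
  also have "\<dots> = M / c^n * (\<Sum>j=1..n+1. 1 / (fact (j - 1) * fact (n + 1 - j)))"
    unfolding sum_distrib_left A_def w_def by (intro sum.cong refl) simp
  also have "\<dots> = M / c^n * (2^n / fact n)"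
    by (simp only: sum_inverse_fact_mult_fact)
  finally show ?thesis
    using \<open>c > 0\<close> by (simp add: M_def A_def field_simps)
qed

lemma diff_ge_of_gaps_ge:
  fixes \<theta> :: "nat \<Rightarrow> real"
  assumes "i \<le> l" "\<And>j. i \<le> j \<Longrightarrow> j < l \<Longrightarrow> d \<le> \<theta> (Suc j) - \<theta> j"
  shows "real (l - i) * d \<le> \<theta> l - \<theta> i"
  using assms
proof (induction l rule: dec_induct)
  case (step l)
  then have "real (l - i) * d \<le> \<theta> l - \<theta> i" "d \<le> \<theta> (Suc l) - \<theta> l"
    by simp_all
  then show ?case
    using step.hyps by (simp add: Suc_diff_le algebra_simps)
qed simp

lemma finite_theta_min_set:
  fixes \<theta> :: "nat \<Rightarrow> real"
  shows "finite {\<bar>\<theta> p - \<theta> j\<bar> | p j. p \<in> {1..n} \<and> j \<in> {1..n} \<and> p \<noteq> j}"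
proof (rule finite_subset)
  show "{\<bar>\<theta> p - \<theta> j\<bar> | p j. p \<in> {1..n} \<and> j \<in> {1..n} \<and> p \<noteq> j}
      \<subseteq> (\<lambda>(p, j). \<bar>\<theta> p - \<theta> j\<bar>) ` ({1..n} \<times> {1..n})"
    by auto
  show "finite ((\<lambda>(p, j). \<bar>\<theta> p - \<theta> j\<bar>) ` ({1..n::nat} \<times> {1..n}))"
    by simp
qed

lemma theta_min_le:
  assumes "p \<in> {1..n}" "j \<in> {1..n}" "p \<noteq> j"
  shows "theta_min n \<theta> \<le> \<bar>\<theta> p - \<theta> j\<bar>"
  unfolding theta_min_def using assms by (intro Min_le finite_theta_min_set) blast

lemma theta_min_nonneg:
  assumes "n \<ge> 2"
  shows "0 \<le> theta_min n \<theta>"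
proof -
  have "\<bar>\<theta> 1 - \<theta> 2\<bar> \<in> {\<bar>\<theta> p - \<theta> j\<bar> | p j. p \<in> {1..n} \<and> j \<in> {1..n} \<and> p \<noteq> j}"
    using assms by force
  then show ?thesis
    unfolding theta_min_def by (subst Min_ge_iff[OF finite_theta_min_set]) auto
qed

lemma theta_min_spacing:
  fixes \<theta> :: "nat \<Rightarrow> real"
  assumes incr: "\<And>j. j \<in> {1..<n} \<Longrightarrow> \<theta> j < \<theta> (j + 1)"
    and "i \<in> {1..n}" "j \<in> {1..n}"
  shows "theta_min n \<theta> * \<bar>real i - real j\<bar> \<le> \<bar>\<theta> i - \<theta> j\<bar>"
proof -
  have ordered: "theta_min n \<theta> * (real b - real a) \<le> \<theta> b - \<theta> a"
    if "a \<le> b" "a \<in> {1..n}" "b \<in> {1..n}" for a b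
  proof -
    have gap: "theta_min n \<theta> \<le> \<theta> (Suc m) - \<theta> m" if "a \<le> m" "m < b" for m
      using theta_min_le[of "Suc m" n m \<theta>] incr[of m] \<open>a \<in> {1..n}\<close> \<open>b \<in> {1..n}\<close> that
      by simp
    have "real (b - a) * theta_min n \<theta> \<le> \<theta> b - \<theta> a"
      by (rule diff_ge_of_gaps_ge[where \<theta>=\<theta>, OF \<open>a \<le> b\<close> gap])
    then show ?thesis
      using \<open>a \<le> b\<close> by (simp add: of_nat_diff mult.commute)
  qed
  show ?thesis
  proof (cases "i \<le> j")
    case True
    then show ?thesis using ordered[of i j] assms(2,3) by simp
  next
    case False
    then show ?thesis using ordered[of j i] assms(2,3) by simp
  qed
qed

theorem corollary3p1:
  fixes k :: nat and \<theta> \<theta>h :: "nat \<Rightarrow> real"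
  assumes "k \<ge> 1"
    and "\<And>j. j \<in> {1..k+1} \<Longrightarrow> - (pi/2) \<le> \<theta> j \<and> \<theta> j \<le> pi/2"
    and "\<And>j. j \<in> {1..k} \<Longrightarrow> \<theta> j < \<theta> (j+1)"
  shows "inf_norm (k+1) (eta (k+1) k (\<lambda>j. cis (\<theta> j)) (\<lambda>l. cis (\<theta>h l)))
           \<ge> xi k * (2 * theta_min (k+1) \<theta> / pi) ^ k"
proof -
  define p where "p = (\<Prod>l\<in>{1..k}. [:- cis (\<theta>h l), 1:])"
  define M where "M = Max ((\<lambda>j. cmod (poly p (cis (\<theta> j)))) ` {1..k+1})"
  define c where "c = 2 * theta_min (k+1) \<theta> / pi"
  have norm_eq: "inf_norm (k+1) (eta (k+1) k (\<lambda>j. cis (\<theta> j)) (\<lambda>l. cis (\<theta>h l))) = M"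
    by (simp add: inf_norm_def eta_def M_def p_def poly_prod prod_norm abs_prod)
  have "0 \<le> c"
    using theta_min_nonneg[of "k+1" \<theta>] assms(1) by (simp add: c_def)
  \<comment> \<open>\<open>c\<close> is in fact positive, but the degenerate case is trivial and needs no proof of that\<close>
  then consider "c = 0" | "c > 0"
    by linarith
  then show ?thesis
  proof cases
    case 1
    have "0 \<le> M"
      unfolding M_def by (rule order_trans[OF norm_ge_zero Max_ge]) auto
    then show ?thesis
      unfolding norm_eq c_def[symmetric] using 1 assms(1) by (simp add: power_0_left)
  next
    case 2
    have spread: "c * \<bar>real i - real j\<bar> \<le> cmod (cis (\<theta> i) - cis (\<theta> j))"
      if "i \<in> {1..k+1}" "j \<in> {1..k+1}" for i j
    proof -
      have "\<bar>\<theta> i - \<theta> j\<bar> \<le> pi"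
        using assms(2)[OF that(1)] assms(2)[OF that(2)] by linarith
      have "theta_min (k+1) \<theta> * \<bar>real i - real j\<bar> \<le> \<bar>\<theta> i - \<theta> j\<bar>"
        using assms(3) that by (intro theta_min_spacing) auto
      then have "c * \<bar>real i - real j\<bar> \<le> 2/pi * \<bar>\<theta> i - \<theta> j\<bar>"
        by (simp add: c_def divide_right_mono)
      also have "\<dots> \<le> cmod (cis (\<theta> i) - cis (\<theta> j))"
        by (rule norm_cis_diff_ge) fact
      finally show ?thesis .
    qed
    have "degree p = k"
      by (simp add: p_def degree_prod_linear)
    moreover have "lead_coeff p = 1"
      unfolding p_def by (rule lead_coeff_prod_linear)
    ultimately have "fact k / 2^k * c^k \<le> M"
      unfolding M_def using 2 spread by (rule max_norm_monic_poly_ge)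
    moreover have "xi k * c^k \<le> fact k / 2^k * c^k"
      using xi_le_fact_div_power[OF assms(1)] 2 by (intro mult_right_mono) auto
    ultimately show ?thesis
      unfolding norm_eq c_def[symmetric] by linarith
  qed
qed

end
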